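(* Let $S$ be a rectangular band semigroup and let $\omega$ be a separable weight on $S$. Then $\ell^{1}(S,\omega)$ is pseudo-amenable if and only if $S$ is a singleton.
   Context: A rectangular band semigroup is a semigroup $S$ with $s^2=s$ and $sts=s$ for all $s,t\in S$; every such $S$ is isomorphic to $L\times R$ where $L$ is a left zero semigroup ($st=s$ for all $s,t$) and $R$ is a right zero semigroup ($st=t$ for all $s,t$). A weight on a semigroup is a function $\omega$ into $(0,\infty)$ with $\omega(st)\le\omega(s)\omega(t)$; a weight $\omega$ on $S\cong L\times R$ is separable if there are weights $\omega_L$ on $L$ and $\omega_R$ on $R$ with $\omega(l,r)=\omega_L(l)\omega_R(r)$. The Beurling algebra $\ell^{1}(S,\omega)$ is the space of $f=\sum_s f(s)\delta_s$ with $\sum_s|f(s)|\omega(s)<\infty$, with convolution $\delta_s*\delta_t=\delta_{st}$. For a Banach algebra $\mathcal{A}$, let $\pi:\mathcal{A}\hat{\otimes}\mathcal{A}\to\mathcal{A}$, $\pi(a\otimes b)=ab$, with the bimodule structure $c\cdot(a\otimes b)=ca\otimes b$, $(a\otimes b)\cdot c=a\otimes bc$. An approximate diagonal is a net $(m_i)$ in $\mathcal{A}\hat{\otimes}\mathcal{A}$ with $a\cdot m_i-m_i\cdot a\to0$ and $a\pi(m_i)\to a$ for all $a\in\mathcal{A}$; $\mathcal{A}$ is pseudo-amenable if it has an approximate diagonal. *)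

theory Defs
  imports "HOL-Analysis.Analysis"
begin

definition rectangular_band :: "('a::semigroup_mult) itself \<Rightarrow> bool" where
  "rectangular_band (_ :: 'a itself) \<longleftrightarrow>
     (\<forall>s::'a. s * s = s) \<and> (\<forall>s t::'a. s * t * s = s)"

definition is_weight :: "('a::semigroup_mult \<Rightarrow> real) \<Rightarrow> bool" where
  "is_weight w \<longleftrightarrow> (\<forall>s. 0 < w s) \<and> (\<forall>s t. w (s * t) \<le> w s * w t)"

text \<open>Separable weight: there is an isomorphism phi of S onto L x R, where L (a set)
  carries the left zero product (l m = l) and R the right zero product (r q = q),
  together with weights wL on L and wR on R such that w = (wL x wR) o phi.
  Since L and R have cardinality at most that of S, they may be taken as subsets
  of the carrier type of S without loss of generality.\<close>
definition separable_weight :: "('a::semigroup_mult \<Rightarrow> real) \<Rightarrow> bool" where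
  "separable_weight w \<longleftrightarrow>
     (\<exists>(L::'a set) (R::'a set) (phi::'a \<Rightarrow> 'a \<times> 'a) (wL::'a \<Rightarrow> real) (wR::'a \<Rightarrow> real).
        bij_betw phi UNIV (L \<times> R) \<and>
        (\<forall>s t. phi (s * t) = (fst (phi s), snd (phi t))) \<and>
        (\<forall>l\<in>L. 0 < wL l) \<and> (\<forall>l\<in>L. \<forall>m\<in>L. wL l \<le> wL l * wL m) \<and>
        (\<forall>r\<in>R. 0 < wR r) \<and> (\<forall>r\<in>R. \<forall>q\<in>R. wR q \<le> wR r * wR q) \<and>
        (\<forall>s. w s = wL (fst (phi s)) * wR (snd (phi s))))"

definition l1_space :: "('b \<Rightarrow> real) \<Rightarrow> ('b \<Rightarrow> complex) set" where
  "l1_space w = {f. (\<lambda>s. norm (f s) * w s) summable_on UNIV}"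

definition l1_norm :: "('b \<Rightarrow> real) \<Rightarrow> ('b \<Rightarrow> complex) \<Rightarrow> real" where
  "l1_norm w f = (\<Sum>\<^sub>\<infinity>s. norm (f s) * w s)"

definition bconv :: "('a::semigroup_mult \<Rightarrow> complex) \<Rightarrow> ('a \<Rightarrow> complex) \<Rightarrow> 'a \<Rightarrow> complex" where
  "bconv f g u = (\<Sum>\<^sub>\<infinity>(s,t)\<in>{(s,t). s * t = u}. f s * g t)"

text \<open>The projective tensor product l1(S,w) (x) l1(S,w) is identified (isometrically)
  with l1(S x S, w x w), a (x) b corresponding to (x,y) |-> a x * b y.\<close>
definition tensor_weight :: "('a \<Rightarrow> real) \<Rightarrow> 'a \<times> 'a \<Rightarrow> real" where
  "tensor_weight w = (\<lambda>(x,y). w x * w y)"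

text \<open>Left module action c.(a (x) b) = ca (x) b.\<close>
definition blmod :: "('a::semigroup_mult \<Rightarrow> complex) \<Rightarrow> ('a \<times> 'a \<Rightarrow> complex) \<Rightarrow> 'a \<times> 'a \<Rightarrow> complex" where
  "blmod c m = (\<lambda>(u,v). \<Sum>\<^sub>\<infinity>(s,x)\<in>{(s,x). s * x = u}. c s * m (x,v))"

text \<open>Right module action (a (x) b).c = a (x) bc.\<close>
definition brmod :: "('a::semigroup_mult \<times> 'a \<Rightarrow> complex) \<Rightarrow> ('a \<Rightarrow> complex) \<Rightarrow> 'a \<times> 'a \<Rightarrow> complex" where
  "brmod m c = (\<lambda>(u,v). \<Sum>\<^sub>\<infinity>(y,t)\<in>{(y,t). y * t = v}. m (u,y) * c t)"

text \<open>The product map pi(a (x) b) = ab.\<close>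
definition bpi :: "('a::semigroup_mult \<times> 'a \<Rightarrow> complex) \<Rightarrow> 'a \<Rightarrow> complex" where
  "bpi m u = (\<Sum>\<^sub>\<infinity>(x,y)\<in>{(x,y). x * y = u}. m (x,y))"

text \<open>Approximate diagonal, for a net m indexed by a (directed set, encoded as a) filter F.\<close>
definition approx_diagonal :: "('a::semigroup_mult \<Rightarrow> real) \<Rightarrow> 'i filter \<Rightarrow> ('i \<Rightarrow> 'a \<times> 'a \<Rightarrow> complex) \<Rightarrow> bool" where
  "approx_diagonal w F m \<longleftrightarrow>
     F \<noteq> bot \<and>
     (\<forall>\<^sub>F i in F. m i \<in> l1_space (tensor_weight w)) \<and>
     (\<forall>a\<in>l1_space w.
        ((\<lambda>i. l1_norm (tensor_weight w) (blmod a (m i) - brmod (m i) a)) \<longlongrightarrow> 0) F \<and>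
        ((\<lambda>i. l1_norm w (bconv a (bpi (m i)) - a)) \<longlongrightarrow> 0) F)"

text \<open>Pseudo-amenability: existence of an approximate diagonal (a net in the tensor
  product; every net is equivalent to a filter on the tensor product itself).\<close>
definition pseudo_amenable_beurling :: "('a::semigroup_mult \<Rightarrow> real) \<Rightarrow> bool" where
  "pseudo_amenable_beurling w \<longleftrightarrow>
     (\<exists>F :: ('a \<times> 'a \<Rightarrow> complex) filter. approx_diagonal w F (\<lambda>m. m))"

end

theory Submission
  imports Defs
begin

(* Separability forces the weight to be at least 1, so point evaluations are bounded by
   the l1 norm and an approximate diagonal can be tested against point masses.
   The convolution delta_s * e only sums e over the fibres of t |-> s t, and in a
   rectangular band the fibre of s1 over s1 coincides with the fibre of s2 over s2 s1.
   Hence if s2 s1 ~= s2, then delta_s1 * e - delta_s1 and delta_s2 * e - delta_s2 take the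
   values T - 1 at s1 and T at s2 s1, so e = pi(m) cannot be an approximate right identity
   for both point masses: S must be left zero. In a left zero semigroup
   delta_s . m - m . delta_s is the column sums of m placed on the row of s, minus m; for
   s1 ~= s2 the row s1 of the difference of the two defects sums to the total mass of m,
   which must nevertheless be close to 1. So S is trivial, and conversely for a singleton
   the constant diagonal works. *)

definition delta :: "'a \<Rightarrow> 'a \<Rightarrow> complex" where
  "delta s = (\<lambda>u. if u = s then 1 else 0)"

definition pushforward :: "('b \<Rightarrow> 'c) \<Rightarrow> ('b \<Rightarrow> 'v::banach) \<Rightarrow> 'c \<Rightarrow> 'v" where
  "pushforward f h c = infsum h {b. f b = c}"

lemma
  fixes h :: "'b \<Rightarrow> 'v::banach" and f :: "'b \<Rightarrow> 'c"
  assumes "h summable_on UNIV"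
  shows summable_on_pushforward: "pushforward f h summable_on UNIV"
    and infsum_pushforward: "infsum (pushforward f h) UNIV = infsum h UNIV"
proof -
  have graph: "bij_betw (\<lambda>b. (f b, b)) UNIV (SIGMA c:UNIV. {b. f b = c})"
    by (auto simp: bij_betw_def inj_on_def image_def)
  have sigma: "(\<lambda>(c, b). h b) summable_on (SIGMA c:UNIV. {b. f b = c})"
    using summable_on_reindex_bij_betw[OF graph, of "\<lambda>(c, b). h b"] assms by simp
  show "pushforward f h summable_on UNIV"
    using summable_on_Sigma_banach[OF sigma] by (simp add: pushforward_def[abs_def])
  have "infsum (pushforward f h) UNIV = infsum (\<lambda>(c, b). h b) (SIGMA c:UNIV. {b. f b = c})"
    using infsum_Sigma'_banach[OF sigma] by (simp add: pushforward_def[abs_def])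
  also have "\<dots> = infsum h UNIV"
    using infsum_reindex_bij_betw[OF graph, of "\<lambda>(c, b). h b"] by simp
  finally show "infsum (pushforward f h) UNIV = infsum h UNIV" .
qed

lemma
  fixes h :: "'b \<Rightarrow> complex" and f :: "'b \<Rightarrow> 'c"
  assumes W: "\<And>c. 0 \<le> W c" and dominated: "\<And>b. W (f b) \<le> C * V b"
    and h: "h \<in> l1_space V"
  shows l1_space_pushforward: "pushforward f h \<in> l1_space W"
    and l1_norm_pushforward_le: "l1_norm W (pushforward f h) \<le> C * l1_norm V h"
proof -
  define g where "g b = norm (h b) * W (f b)" for b
  have hV: "(\<lambda>b. norm (h b) * V b) summable_on UNIV"
    using h by (simp add: l1_space_def)
  have g_le: "g b \<le> C * (norm (h b) * V b)" for b
    using mult_left_mono[OF dominated[of b], of "norm (h b)"] by (simp add: g_def mult_ac)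
  have g: "g summable_on UNIV"
    by (rule summable_on_comparison_test[OF summable_on_cmult_right[OF hV]])
      (use g_le W in \<open>auto simp: g_def\<close>)
  have pointwise: "norm (pushforward f h c) * W c \<le> pushforward f g c" for c
  proof -
    have "(\<lambda>b. norm (W c *\<^sub>R h b)) summable_on {b. f b = c}"
      using summable_on_subset_banach[OF g, of "{b. f b = c}"]
      by (rule summable_on_cong[THEN iffD1, rotated]) (use W in \<open>auto simp: g_def\<close>)
    then have "norm (infsum (\<lambda>b. W c *\<^sub>R h b) {b. f b = c})
        \<le> infsum (\<lambda>b. norm (W c *\<^sub>R h b)) {b. f b = c}"
      by (intro norm_infsum_bound) simp
    also have "\<dots> = pushforward f g c"
      unfolding pushforward_def by (rule infsum_cong) (use W in \<open>auto simp: g_def\<close>)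
    finally show ?thesis
      using W[of c] by (simp add: pushforward_def infsum_scaleR_right mult.commute)
  qed
  have pushed: "(\<lambda>c. norm (pushforward f h c) * W c) summable_on UNIV"
    by (rule summable_on_comparison_test[OF summable_on_pushforward[OF g]])
      (use pointwise W in auto)
  then show "pushforward f h \<in> l1_space W"
    by (simp add: l1_space_def)
  have "l1_norm W (pushforward f h) \<le> infsum (pushforward f g) UNIV"
    unfolding l1_norm_def
    by (rule infsum_mono[OF pushed summable_on_pushforward[OF g] pointwise])
  also have "\<dots> = infsum g UNIV"
    by (rule infsum_pushforward[OF g])
  also have "\<dots> \<le> infsum (\<lambda>b. C * (norm (h b) * V b)) UNIV"
    by (rule infsum_mono[OF g summable_on_cmult_right[OF hV] g_le])
  also have "\<dots> = C * l1_norm V h"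
    by (simp add: l1_norm_def infsum_cmult_right')
  finally show "l1_norm W (pushforward f h) \<le> C * l1_norm V h" .
qed

lemma
  fixes f g :: "'b \<Rightarrow> complex"
  assumes w: "\<And>u. 0 \<le> w u" and f: "f \<in> l1_space w" and g: "g \<in> l1_space w"
  shows l1_space_diff: "f - g \<in> l1_space w"
    and l1_norm_diff_le: "l1_norm w (f - g) \<le> l1_norm w f + l1_norm w g"
proof -
  have fw: "(\<lambda>u. norm (f u) * w u) summable_on UNIV"
    and gw: "(\<lambda>u. norm (g u) * w u) summable_on UNIV"
    using f g by (simp_all add: l1_space_def)
  have le: "norm ((f - g) u) * w u \<le> norm (f u) * w u + norm (g u) * w u" for u
    using mult_right_mono[OF norm_triangle_ineq4[of "f u" "g u"] w[of u]]
    by (simp add: algebra_simps)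
  have diff: "(\<lambda>u. norm ((f - g) u) * w u) summable_on UNIV"
    by (rule summable_on_comparison_test[OF summable_on_add[OF fw gw]]) (use le w in auto)
  then show "f - g \<in> l1_space w"
    by (simp add: l1_space_def)
  have "l1_norm w (f - g) \<le> infsum (\<lambda>u. norm (f u) * w u + norm (g u) * w u) UNIV"
    unfolding l1_norm_def by (rule infsum_mono[OF diff summable_on_add[OF fw gw] le])
  also have "\<dots> = l1_norm w f + l1_norm w g"
    by (simp add: l1_norm_def infsum_add[OF fw gw])
  finally show "l1_norm w (f - g) \<le> l1_norm w f + l1_norm w g" .
qed

lemma norm_le_l1_norm:
  assumes "\<And>u. 1 \<le> w u" and "f \<in> l1_space w"
  shows "norm (f u) \<le> l1_norm w f"
proof -
  have w: "0 \<le> w v" for v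
    using assms(1)[of v] by linarith
  have "norm (f u) \<le> norm (f u) * w u"
    using assms(1)[of u] by (simp add: mult_le_cancel_left1)
  also have "\<dots> = sum (\<lambda>u. norm (f u) * w u) {u}"
    by simp
  also have "\<dots> \<le> l1_norm w f"
    unfolding l1_norm_def
    by (rule finite_sum_le_infsum) (use assms(2) w in \<open>auto simp: l1_space_def\<close>)
  finally show ?thesis .
qed

lemma delta_in_l1_space: "delta s \<in> l1_space w"
  unfolding l1_space_def mem_Collect_eq
  by (rule finite_nonzero_values_imp_summable_on) (auto simp: delta_def intro: finite_subset[of _ "{s}"])

lemma is_weight_nonneg: "is_weight w \<Longrightarrow> 0 \<le> w s"
  by (simp add: is_weight_def less_imp_le)

lemma is_weight_mult: "is_weight w \<Longrightarrow> w (s * t) \<le> w s * w t"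
  by (simp add: is_weight_def)

lemma tensor_weight_nonneg: "is_weight w \<Longrightarrow> 0 \<le> tensor_weight w p"
  by (cases p) (simp add: tensor_weight_def is_weight_nonneg)

lemma tensor_weight_ge_one: "(\<And>s. 1 \<le> w s) \<Longrightarrow> 1 \<le> tensor_weight w p"
  by (cases p) (simp add: tensor_weight_def, metis mult_mono' mult_1 zero_le_one)

lemma separable_weight_ge_one:
  assumes "separable_weight w"
  shows "1 \<le> w s"
proof -
  obtain L R :: "'a set" and phi :: "'a \<Rightarrow> 'a \<times> 'a" and wL wR :: "'a \<Rightarrow> real"
    where phi: "bij_betw phi UNIV (L \<times> R)"
      and wL: "\<forall>l\<in>L. 0 < wL l" "\<forall>l\<in>L. \<forall>m\<in>L. wL l \<le> wL l * wL m"
      and wR: "\<forall>r\<in>R. 0 < wR r" "\<forall>r\<in>R. \<forall>q\<in>R. wR q \<le> wR r * wR q"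
      and w: "\<forall>s. w s = wL (fst (phi s)) * wR (snd (phi s))"
    using assms unfolding separable_weight_def by blast
  have "fst (phi s) \<in> L" "snd (phi s) \<in> R"
    using bij_betw_apply[OF phi] by (auto simp: mem_Times_iff)
  then have "1 \<le> wL (fst (phi s))" "1 \<le> wR (snd (phi s))"
    using wL wR by (metis mult_le_cancel_left1)+
  then show ?thesis
    using w by (metis mult_mono' mult_1 zero_le_one)
qed

lemma rectangular_band_mult_mult:
  assumes "rectangular_band TYPE('a::semigroup_mult)"
  shows "x * y * z = x * (z::'a)"
proof -
  have band: "s * t * s = s" for s t :: 'a
    using assms by (simp add: rectangular_band_def)
  have "x * y * z = (x * z * x) * y * (z * x * z)"
    by (simp add: band)
  also have "\<dots> = (x * z) * (x * y * z) * (x * z)"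
    by (simp add: mult.assoc)
  also have "\<dots> = x * z"
    by (rule band)
  finally show ?thesis .
qed

lemma bconv_delta: "bconv (delta s) g = pushforward ((*) s) g"
proof
  fix u
  have "bconv (delta s) g u = infsum (\<lambda>(a, t). delta s a * g t) ((\<lambda>t. (s, t)) ` {t. s * t = u})"
    unfolding bconv_def by (rule infsum_cong_neutral) (auto simp: delta_def)
  also have "\<dots> = pushforward ((*) s) g u"
    by (subst infsum_reindex) (auto simp: inj_on_def o_def delta_def pushforward_def)
  finally show "bconv (delta s) g u = pushforward ((*) s) g u" .
qed

lemma bpi_eq_pushforward: "bpi m = pushforward (\<lambda>(x, y). x * y) m"
  unfolding bpi_def pushforward_def by (simp add: split_def)

lemma pushforward_slice:
  "pushforward (\<lambda>(x, y). (f x, y)) m (u, v) = infsum (\<lambda>x. m (x, v)) {x. f x = u}"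
proof -
  have "{b. (\<lambda>(x, y). (f x, y)) b = (u, v)} = (\<lambda>x. (x, v)) ` {x. f x = u}"
    by auto
  then show ?thesis
    by (simp add: pushforward_def infsum_reindex inj_on_def o_def)
qed

lemma blmod_delta: "blmod (delta s) m = pushforward (\<lambda>(x, y). (s * x, y)) m"
proof (rule ext, clarify)
  fix u v
  have "blmod (delta s) m (u, v)
      = infsum (\<lambda>(a, x). delta s a * m (x, v)) ((\<lambda>x. (s, x)) ` {x. s * x = u})"
    unfolding blmod_def by simp (rule infsum_cong_neutral, auto simp: delta_def)
  also have "\<dots> = infsum (\<lambda>x. m (x, v)) {x. s * x = u}"
    by (subst infsum_reindex) (auto simp: inj_on_def o_def delta_def)
  finally show "blmod (delta s) m (u, v) = pushforward (\<lambda>(x, y). (s * x, y)) m (u, v)"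
    by (simp add: pushforward_slice)
qed

lemma brmod_delta: "brmod m (delta s) (u, v) = infsum (\<lambda>y. m (u, y)) {y. y * s = v}"
proof -
  have "brmod m (delta s) (u, v)
      = infsum (\<lambda>(y, t). m (u, y) * delta s t) ((\<lambda>y. (y, s)) ` {y. y * s = v})"
    unfolding brmod_def by simp (rule infsum_cong_neutral, auto simp: delta_def)
  also have "\<dots> = infsum (\<lambda>y. m (u, y)) {y. y * s = v}"
    by (subst infsum_reindex) (auto simp: inj_on_def o_def delta_def)
  finally show ?thesis .
qed

lemma l1_space_bconv_delta:
  assumes "is_weight w" and "e \<in> l1_space w"
  shows "bconv (delta s) e \<in> l1_space w"
  unfolding bconv_delta
  by (rule l1_space_pushforward[where C = "w s"])
    (use assms in \<open>simp_all add: is_weight_nonneg is_weight_mult\<close>)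

lemma l1_space_bpi:
  assumes "is_weight w" and "m \<in> l1_space (tensor_weight w)"
  shows "bpi m \<in> l1_space w"
  unfolding bpi_eq_pushforward
  by (rule l1_space_pushforward[where C = 1])
    (use assms in \<open>auto simp: is_weight_nonneg is_weight_mult tensor_weight_def\<close>)

lemma l1_space_blmod_delta:
  assumes w: "is_weight w" and "m \<in> l1_space (tensor_weight w)"
  shows "blmod (delta s) m \<in> l1_space (tensor_weight w)"
  unfolding blmod_delta
proof (rule l1_space_pushforward[where C = "w s"])
  fix b :: "'a \<times> 'a"
  show "tensor_weight w ((\<lambda>(x, y). (s * x, y)) b) \<le> w s * tensor_weight w b"
    using mult_right_mono[OF is_weight_mult[OF w, of s "fst b"] is_weight_nonneg[OF w, of "snd b"]]
    by (cases b) (simp add: tensor_weight_def mult_ac)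
qed (use assms in \<open>simp_all add: is_weight_nonneg tensor_weight_nonneg\<close>)

lemma one_le_right_identity_defect:
  fixes w :: "'a::semigroup_mult \<Rightarrow> real"
  assumes band: "rectangular_band TYPE('a)" and w: "is_weight w" "\<And>s. 1 \<le> w s"
    and e: "e \<in> l1_space w" and not_left_zero: "s2 * s1 \<noteq> s2"
  shows "1 \<le> l1_norm w (bconv (delta s1) e - delta s1) + l1_norm w (bconv (delta s2) e - delta s2)"
proof -
  define T where "T = infsum e {t. s1 * t = s1}"
  have fibre: "{t. s2 * t = s2 * s1} = {t. s1 * t = s1}"
  proof safe
    fix t assume "s2 * t = s2 * s1"
    then have "s1 * s2 * t = s1 * s2 * s1"
      by (simp add: mult.assoc)
    then show "s1 * t = s1"
      using band by (simp add: rectangular_band_mult_mult rectangular_band_def)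
  next
    fix t assume "s1 * t = s1"
    then show "s2 * t = s2 * s1"
      by (metis mult.assoc rectangular_band_mult_mult[OF band])
  qed
  have defect_l1: "bconv (delta s) e - delta s \<in> l1_space w" for s
    by (intro l1_space_diff l1_space_bconv_delta delta_in_l1_space is_weight_nonneg w e)
  have "(bconv (delta s1) e - delta s1) s1 = T - 1"
    by (simp add: bconv_delta pushforward_def T_def) (simp add: delta_def)
  then have "norm (T - 1) \<le> l1_norm w (bconv (delta s1) e - delta s1)"
    using norm_le_l1_norm[OF w(2) defect_l1[of s1], where u = s1] by simp
  moreover have "(bconv (delta s2) e - delta s2) (s2 * s1) = T"
    using not_left_zero by (simp add: bconv_delta pushforward_def T_def fibre) (simp add: delta_def)
  then have "norm T \<le> l1_norm w (bconv (delta s2) e - delta s2)"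
    using norm_le_l1_norm[OF w(2) defect_l1[of s2], where u = "s2 * s1"] by simp
  moreover have "1 \<le> norm (T - 1) + norm T"
    using norm_triangle_ineq4[of T "T - 1"] by simp
  ultimately show ?thesis
    by linarith
qed

lemma pushforward_fst: "pushforward fst h u = infsum (\<lambda>y. h (u, y)) UNIV"
proof -
  have "bij_betw (Pair u) UNIV {b. fst b = u}"
    by (auto simp: bij_betw_def inj_on_def image_def)
  from infsum_reindex_bij_betw[OF this, of h] show ?thesis
    by (simp add: pushforward_def)
qed

lemma pushforward_snd: "pushforward snd h v = infsum (\<lambda>x. h (x, v)) UNIV"
proof -
  have "bij_betw (\<lambda>x. (x, v)) UNIV {b. snd b = v}"
    by (auto simp: bij_betw_def inj_on_def image_def)
  from infsum_reindex_bij_betw[OF this, of h] show ?thesis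
    by (simp add: pushforward_def)
qed

lemma
  fixes m :: "'a::semigroup_mult \<times> 'a \<Rightarrow> complex"
  assumes left_zero: "\<And>x y::'a. x * y = x"
  shows bconv_delta_left_zero: "bconv (delta s) g u = (if u = s then infsum g UNIV else 0)"
    and blmod_delta_left_zero: "blmod (delta s) m (u, v) = (if u = s then pushforward snd m v else 0)"
    and brmod_delta_left_zero: "brmod m (delta s) = m"
proof -
  show "bconv (delta s) g u = (if u = s then infsum g UNIV else 0)"
    using left_zero by (simp add: bconv_delta pushforward_def)
  show "blmod (delta s) m (u, v) = (if u = s then pushforward snd m v else 0)"
    using left_zero by (simp add: blmod_delta pushforward_slice pushforward_snd)
  have "brmod m (delta s) (u, y) = m (u, y)" for u y
    using left_zero by (simp add: brmod_delta)
  then show "brmod m (delta s) = m"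
    by auto
qed

lemma l1_space_summable:
  assumes "\<And>u. 1 \<le> w u" and "f \<in> l1_space w"
  shows "f summable_on UNIV"
proof -
  have "(\<lambda>u. norm (f u)) summable_on UNIV"
    by (rule summable_on_comparison_test[of "\<lambda>u. norm (f u) * w u"])
      (use assms in \<open>auto simp: l1_space_def mult_le_cancel_left1\<close>)
  then show ?thesis
    by (simp add: abs_summable_summable)
qed

lemma norm_infsum_le_diagonal_defects_left_zero:
  fixes w :: "'a::semigroup_mult \<Rightarrow> real"
  assumes left_zero: "\<And>x y::'a. x * y = x" and w: "is_weight w" "\<And>s. 1 \<le> w s"
    and m: "m \<in> l1_space (tensor_weight w)" and ne: "s1 \<noteq> s2"
  shows "norm (infsum m UNIV)
    \<le> l1_norm (tensor_weight w) (blmod (delta s1) m - brmod m (delta s1))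
      + l1_norm (tensor_weight w) (blmod (delta s2) m - brmod m (delta s2))"
proof -
  define D where "D s = blmod (delta s) m - brmod m (delta s)" for s
  have w0: "0 \<le> w s" for s
    by (rule is_weight_nonneg[OF w(1)])
  have tw: "1 \<le> tensor_weight w p" "0 \<le> tensor_weight w p" for p
    using w by (auto intro: tensor_weight_ge_one tensor_weight_nonneg)
  have D_l1: "D s \<in> l1_space (tensor_weight w)" for s
    unfolding D_def brmod_delta_left_zero[OF left_zero]
    by (intro l1_space_diff l1_space_blmod_delta w m tw)
  have diff_l1: "D s1 - D s2 \<in> l1_space (tensor_weight w)"
    by (rule l1_space_diff[OF tw(2) D_l1 D_l1])
  have fst_dominated: "w (fst p) \<le> 1 * tensor_weight w p" for p
    using w(2)[of "snd p"] w0[of "fst p"]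
    by (cases p) (simp add: tensor_weight_def mult_le_cancel_left1)
  note pushed = l1_space_pushforward[where W = w, OF w0 fst_dominated diff_l1]
    l1_norm_pushforward_le[where W = w, OF w0 fst_dominated diff_l1]
  have "pushforward fst (D s1 - D s2) s1 = infsum (pushforward snd m) UNIV"
    using ne by (simp add: pushforward_fst D_def blmod_delta_left_zero[OF left_zero]
        brmod_delta_left_zero[OF left_zero])
  also have "\<dots> = infsum m UNIV"
    by (rule infsum_pushforward[OF l1_space_summable[OF tw(1) m]])
  finally have "norm (infsum m UNIV) \<le> l1_norm w (pushforward fst (D s1 - D s2))"
    using norm_le_l1_norm[OF w(2) pushed(1), where u = s1] by simp
  also have "\<dots> \<le> l1_norm (tensor_weight w) (D s1 - D s2)"
    using pushed(2) by simp
  also have "\<dots> \<le> l1_norm (tensor_weight w) (D s1) + l1_norm (tensor_weight w) (D s2)"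
    by (rule l1_norm_diff_le[OF tw(2) D_l1 D_l1])
  finally show ?thesis
    unfolding D_def .
qed

lemma one_le_diagonal_defect_left_zero:
  fixes w :: "'a::semigroup_mult \<Rightarrow> real"
  assumes left_zero: "\<And>x y::'a. x * y = x" and w: "is_weight w" "\<And>s. 1 \<le> w s"
    and m: "m \<in> l1_space (tensor_weight w)" and ne: "s1 \<noteq> s2"
  shows "1 \<le> l1_norm w (bconv (delta s1) (bpi m) - delta s1)
    + l1_norm (tensor_weight w) (blmod (delta s1) m - brmod m (delta s1))
    + l1_norm (tensor_weight w) (blmod (delta s2) m - brmod m (delta s2))"
proof -
  define \<sigma> where "\<sigma> = infsum m UNIV"
  have m_summable: "m summable_on UNIV"
    using l1_space_summable[OF _ m] w(2) by (blast intro: tensor_weight_ge_one)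
  have defect_l1: "bconv (delta s1) (bpi m) - delta s1 \<in> l1_space w"
    by (intro l1_space_diff l1_space_bconv_delta l1_space_bpi delta_in_l1_space
        is_weight_nonneg w(1) m)
  have "(bconv (delta s1) (bpi m) - delta s1) s1 = \<sigma> - 1"
    by (simp add: bconv_delta_left_zero[OF left_zero] bpi_eq_pushforward
        infsum_pushforward[OF m_summable] \<sigma>_def) (simp add: delta_def)
  then have "norm (\<sigma> - 1) \<le> l1_norm w (bconv (delta s1) (bpi m) - delta s1)"
    using norm_le_l1_norm[OF w(2) defect_l1, where u = s1] by simp
  moreover have "1 \<le> norm (\<sigma> - 1) + norm \<sigma>"
    using norm_triangle_ineq4[of \<sigma> "\<sigma> - 1"] by simp
  ultimately show ?thesis
    using norm_infsum_le_diagonal_defects_left_zero[OF left_zero w m ne] unfolding \<sigma>_def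
    by linarith
qed

lemma approx_diagonalE:
  assumes ad: "approx_diagonal w F m" and A: "finite A" "A \<subseteq> l1_space w" and \<epsilon>: "0 < \<epsilon>"
  obtains i where "m i \<in> l1_space (tensor_weight w)"
    and "\<And>a. a \<in> A \<Longrightarrow> l1_norm (tensor_weight w) (blmod a (m i) - brmod (m i) a) < \<epsilon>"
    and "\<And>a. a \<in> A \<Longrightarrow> l1_norm w (bconv a (bpi (m i)) - a) < \<epsilon>"
proof -
  have small: "\<forall>\<^sub>F i in F. l1_norm (tensor_weight w) (blmod a (m i) - brmod (m i) a) < \<epsilon>
      \<and> l1_norm w (bconv a (bpi (m i)) - a) < \<epsilon>" if "a \<in> A" for a
  proof -
    have "a \<in> l1_space w"
      using A(2) that by blast
    then have diagonal: "((\<lambda>i. l1_norm (tensor_weight w) (blmod a (m i) - brmod (m i) a)) \<longlongrightarrow> 0) F"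
      and unit: "((\<lambda>i. l1_norm w (bconv a (bpi (m i)) - a)) \<longlongrightarrow> 0) F"
      using ad unfolding approx_diagonal_def by blast+
    show ?thesis
      by (rule eventually_conj[OF order_tendstoD(2)[OF diagonal \<epsilon>] order_tendstoD(2)[OF unit \<epsilon>]])
  qed
  have "\<forall>\<^sub>F i in F. m i \<in> l1_space (tensor_weight w)"
    using ad by (simp add: approx_diagonal_def)
  moreover have "\<forall>\<^sub>F i in F. \<forall>a\<in>A.
      l1_norm (tensor_weight w) (blmod a (m i) - brmod (m i) a) < \<epsilon>
      \<and> l1_norm w (bconv a (bpi (m i)) - a) < \<epsilon>"
    using small by (intro eventually_ball_finite[OF A(1)]) blast
  ultimately have "\<forall>\<^sub>F i in F. m i \<in> l1_space (tensor_weight w) \<and> (\<forall>a\<in>A.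
      l1_norm (tensor_weight w) (blmod a (m i) - brmod (m i) a) < \<epsilon>
      \<and> l1_norm w (bconv a (bpi (m i)) - a) < \<epsilon>)"
    by (rule eventually_conj)
  moreover have "F \<noteq> bot"
    using ad by (simp add: approx_diagonal_def)
  ultimately obtain i where "m i \<in> l1_space (tensor_weight w) \<and> (\<forall>a\<in>A.
      l1_norm (tensor_weight w) (blmod a (m i) - brmod (m i) a) < \<epsilon>
      \<and> l1_norm w (bconv a (bpi (m i)) - a) < \<epsilon>)"
    using eventually_happens by blast
  then show ?thesis
    using that by blast
qed

lemma pseudo_amenable_imp_left_zero:
  fixes w :: "'a::semigroup_mult \<Rightarrow> real"
  assumes band: "rectangular_band TYPE('a)" and w: "is_weight w" "\<And>s. 1 \<le> w s"
    and pa: "pseudo_amenable_beurling w"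
  shows "y * x = (y::'a)"
proof (rule ccontr)
  assume not_left_zero: "y * x \<noteq> y"
  obtain F where ad: "approx_diagonal w F (\<lambda>m. m)"
    using pa unfolding pseudo_amenable_beurling_def by blast
  have A: "finite {delta x, delta y}" "{delta x, delta y} \<subseteq> l1_space w"
    by (simp_all add: delta_in_l1_space)
  obtain m where m: "m \<in> l1_space (tensor_weight w)"
    and "\<And>a. a \<in> {delta x, delta y} \<Longrightarrow>
      l1_norm (tensor_weight w) (blmod a m - brmod m a) < 1 / 2"
    and unit: "\<And>a. a \<in> {delta x, delta y} \<Longrightarrow> l1_norm w (bconv a (bpi m) - a) < 1 / 2"
    by (rule approx_diagonalE[OF ad A, where \<epsilon> = "1 / 2"]) auto
  have "1 \<le> l1_norm w (bconv (delta x) (bpi m) - delta x) + l1_norm w (bconv (delta y) (bpi m) - delta y)"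
    by (rule one_le_right_identity_defect[OF band w l1_space_bpi[OF w(1) m] not_left_zero])
  moreover have "l1_norm w (bconv (delta x) (bpi m) - delta x) < 1 / 2"
    and "l1_norm w (bconv (delta y) (bpi m) - delta y) < 1 / 2"
    using unit[of "delta x"] unit[of "delta y"] by simp_all
  ultimately show False
    by linarith
qed

lemma pseudo_amenable_left_zero_imp_trivial:
  fixes w :: "'a::semigroup_mult \<Rightarrow> real"
  assumes left_zero: "\<And>x y::'a. x * y = x" and w: "is_weight w" "\<And>s. 1 \<le> w s"
    and pa: "pseudo_amenable_beurling w"
  shows "x = (y::'a)"
proof (rule ccontr)
  assume ne: "x \<noteq> y"
  obtain F where ad: "approx_diagonal w F (\<lambda>m. m)"
    using pa unfolding pseudo_amenable_beurling_def by blast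
  have A: "finite {delta x, delta y}" "{delta x, delta y} \<subseteq> l1_space w"
    by (simp_all add: delta_in_l1_space)
  obtain m where m: "m \<in> l1_space (tensor_weight w)"
    and diagonal: "\<And>a. a \<in> {delta x, delta y} \<Longrightarrow>
      l1_norm (tensor_weight w) (blmod a m - brmod m a) < 1 / 3"
    and unit: "\<And>a. a \<in> {delta x, delta y} \<Longrightarrow> l1_norm w (bconv a (bpi m) - a) < 1 / 3"
    by (rule approx_diagonalE[OF ad A, where \<epsilon> = "1 / 3"]) auto
  have "1 \<le> l1_norm w (bconv (delta x) (bpi m) - delta x)
      + l1_norm (tensor_weight w) (blmod (delta x) m - brmod m (delta x))
      + l1_norm (tensor_weight w) (blmod (delta y) m - brmod m (delta y))"
    by (rule one_le_diagonal_defect_left_zero[OF left_zero w m ne])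
  moreover have "l1_norm w (bconv (delta x) (bpi m) - delta x) < 1 / 3"
    and "l1_norm (tensor_weight w) (blmod (delta x) m - brmod m (delta x)) < 1 / 3"
    and "l1_norm (tensor_weight w) (blmod (delta y) m - brmod m (delta y)) < 1 / 3"
    using unit[of "delta x"] diagonal[of "delta x"] diagonal[of "delta y"] by simp_all
  ultimately show False
    by linarith
qed

lemma singleton_imp_pseudo_amenable:
  fixes w :: "'a::semigroup_mult \<Rightarrow> real"
  assumes singleton: "(UNIV :: 'a set) = {x}"
  shows "pseudo_amenable_beurling w"
proof -
  define m0 :: "'a \<times> 'a \<Rightarrow> complex" where "m0 = (\<lambda>_. 1)"
  have all_x: "u = x" for u :: 'a
    using singleton by blast
  have fibre: "{(s, t). s * t = u} = {(x, x)}" for u :: 'a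
    by (auto intro: all_x) (metis all_x)
  have "blmod a m0 = brmod m0 a" and "bconv a (bpi m0) = a" for a
    by (auto simp: blmod_def brmod_def bconv_def bpi_def fibre m0_def fun_eq_iff) (metis all_x)
  moreover have "finite (UNIV :: ('a \<times> 'a) set)"
    by (rule finite_subset[of _ "{(x, x)}"]) (auto intro: all_x)
  ultimately have "approx_diagonal w (principal {m0}) (\<lambda>m. m)"
    by (auto simp: approx_diagonal_def eventually_principal principal_eq_bot_iff l1_space_def
        l1_norm_def intro!: tendsto_eventually)
  then show ?thesis
    unfolding pseudo_amenable_beurling_def by blast
qed

theorem theorem2p7:
  fixes w :: "'a::semigroup_mult \<Rightarrow> real"
  assumes "rectangular_band TYPE('a)"
    and "is_weight w"
    and "separable_weight w"
  shows "pseudo_amenable_beurling w \<longleftrightarrow> (\<exists>x::'a. UNIV = {x})"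
proof
  assume pa: "pseudo_amenable_beurling w"
  have w_ge_one: "1 \<le> w s" for s
    using assms(3) by (rule separable_weight_ge_one)
  have "y * x = y" for x y :: 'a
    by (rule pseudo_amenable_imp_left_zero[OF assms(1,2) w_ge_one pa])
  then have "x = y" for x y :: 'a
    by (rule pseudo_amenable_left_zero_imp_trivial[OF _ assms(2) w_ge_one pa])
  then show "\<exists>x::'a. UNIV = {x}"
    by blast
next
  assume "\<exists>x::'a. UNIV = {x}"
  then show "pseudo_amenable_beurling w"
    using singleton_imp_pseudo_amenable by blast
qed

end
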